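(* Let $\mathbf{u},\mathbf{v}\in\mathbb{R}^n$ be $k$-sparse unit vectors ($k_{\mathbf{u}}=k_{\mathbf{v}}=k$) following power-law decay profiles with rates $\alpha_{\mathbf{u}},\alpha_{\mathbf{v}}\ge0$, and let $\alpha_{\mathbf{u}\mathbf{v}}=\alpha_{\mathbf{u}}+\alpha_{\mathbf{v}}$. Then, asymptotically in $k$, the sample complexity term $\max_{1\le p\le k} p\, s_{\mathbf{u}}(p)s_{\mathbf{v}}(p)$ governing the Bi-SEP sample size requirement $m\gtrsim \max_{1\le p\le k}p\,s_{\mathbf{u}}(p)s_{\mathbf{v}}(p)\log n$ is of order $k^{\tau}$ with $\tau=\max(1,2-\alpha_{\mathbf{u}\mathbf{v}})$, so the requirement becomes $m\gtrsim k^{\tau}\log n$; except in the boundary case $\{\alpha_{\mathbf{u}},\alpha_{\mathbf{v}}\}=\{0,1\}$, where the term is of order $k\log k$, yielding $m\gtrsim k\log k\log n$.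
   Context: A $k$-sparse unit vector $\mathbf{x}\in\mathbb{R}^n$ follows a power-law decay profile with rate $\alpha\ge0$ if its nonzero entries sorted by magnitude satisfy $x_{(i)}^2\propto i^{-\alpha}$ for $i=1,\dots,k$, normalized so that $\|\mathbf{x}\|_2=1$. Here $x_{(i)}$ denotes the $i$-th largest entry in absolute value. Structure function: $s_{\mathbf{u}}(p)=(\sum_{i=1}^p u_{(i)}^2)^{-1}$, $s_{\mathbf{v}}(p)=(\sum_{i=1}^p v_{(i)}^2)^{-1}$. Bi-SEP is a stagewise SCCA algorithm whose guarantee (under the whitened Gaussian spiked model $\boldsymbol{\Sigma}_{xx}=\boldsymbol{\Sigma}_{yy}=\mathbf{I}_n$, $\boldsymbol{\Sigma}_{xy}=\rho\mathbf{u}\mathbf{v}^\top$) holds when $m\ge C\max_{1\le t\le k}(2t)s_{\mathbf{u}}(t)s_{\mathbf{v}}(t)\log n$ in the balanced case. Notation $a\gtrsim b$ means $a\ge Cb$ for an absolute constant $C>0$; $a\asymp b$ means both directions. *)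

theory Defs
  imports Complex_Main
begin

text \<open>Vectors in R^n are represented as functions nat => real supported on {..<n}.\<close>

definition sorted_sq :: "nat \<Rightarrow> (nat \<Rightarrow> real) \<Rightarrow> real list" where
  "sorted_sq n x = rev (sort (map (\<lambda>j. (x j)^2) [0..<n]))"
  \<comment> \<open>squared magnitudes in non-increasing order: entry i-1 is x_(i)^2\<close>

definition sparse_unit :: "nat \<Rightarrow> nat \<Rightarrow> (nat \<Rightarrow> real) \<Rightarrow> bool" where
  "sparse_unit n k x \<longleftrightarrow> (\<forall>j\<ge>n. x j = 0) \<and> card {j. j < n \<and> x j \<noteq> 0} = k
     \<and> (\<Sum>j<n. (x j)^2) = 1"

definition power_law :: "nat \<Rightarrow> nat \<Rightarrow> real \<Rightarrow> (nat \<Rightarrow> real) \<Rightarrow> bool" where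
  "power_law n k \<alpha> x \<longleftrightarrow>
     (\<exists>c>0. \<forall>i\<in>{1..k}. sorted_sq n x ! (i - 1) = c * real i powr (- \<alpha>))"

definition struct_fun :: "nat \<Rightarrow> (nat \<Rightarrow> real) \<Rightarrow> nat \<Rightarrow> real" where
  "struct_fun n x p = inverse (sum_list (take p (sorted_sq n x)))"

definition sample_term :: "nat \<Rightarrow> (nat \<Rightarrow> real) \<Rightarrow> (nat \<Rightarrow> real) \<Rightarrow> nat \<Rightarrow> real" where
  "sample_term n u v k = Max ((\<lambda>p. real p * struct_fun n u p * struct_fun n v p) ` {1..k})"

end

theory Submission
  imports Defs "HOL-Analysis.Harmonic_Numbers" "HOL-Library.Multiset"
begin

(* Write H_a(p) = \<Sum>i=1..p. i^(-a). Under a power-law profile of rate a, s(p) = H_a(k) / H_a(p),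
   so the sample term is the maximum over p of p * H_a(k)/H_a(p) * H_b(k)/H_b(p). The terms at
   p = 1 and p = k give the lower bounds k^(2-a-b) and k. Comparing H_a with the integral of
   t^(-a) bounds H_a(k)/H_a(p) by a constant times (k/p)^e for every e \<ge> max 0 (1 - a), with
   e > 0 when a = 1 because of the logarithm; if the exponent max 1 (2-a-b) can be split into
   two such exponents, every term is at most a constant times k^(max 1 (2-a-b)). The split is
   impossible only for {a, b} = {0, 1}, where the maximum is attained at p = 1 and equals
   k * H_1(k), which lies between k ln k and 2 k ln k. *)

definition gen_harm :: "real \<Rightarrow> nat \<Rightarrow> real" where
  "gen_harm a p = (\<Sum>i=1..p. real i powr - a)"

lemma gen_harm_Suc: "gen_harm a (Suc p) = gen_harm a p + real (Suc p) powr - a"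
  by (simp add: gen_harm_def)

lemma gen_harm_Suc_0 [simp]: "gen_harm a (Suc 0) = 1"
  by (simp add: gen_harm_def)

lemma gen_harm_exponent_0: "gen_harm 0 k = real k"
  by (simp add: gen_harm_def)

lemma gen_harm_exponent_1: "gen_harm 1 k = harm k"
  by (simp add: gen_harm_def harm_def powr_minus)

lemma gen_harm_ge_1:
  assumes "1 \<le> p"
  shows "1 \<le> gen_harm a p"
  using assms
proof (induction p rule: dec_induct)
  case base
  then show ?case by (simp add: gen_harm_def)
next
  case (step p)
  then show ?case by (simp add: gen_harm_Suc add_increasing2)
qed

lemma powr_le_gen_harm:
  assumes "0 \<le> a" "1 \<le> p"
  shows "real p powr (1 - a) \<le> gen_harm a p"
proof -
  have "real p powr (1 - a) = (\<Sum>i=1..p. real p powr - a)"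
    using assms by (simp add: powr_diff powr_minus divide_inverse)
  also have "\<dots> \<le> gen_harm a p"
    unfolding gen_harm_def using assms by (intro sum_mono) (auto intro!: powr_mono2')
  finally show ?thesis .
qed

definition powr_primitive :: "real \<Rightarrow> real \<Rightarrow> real" where
  "powr_primitive a t = (if a = 1 then ln t else t powr (1 - a) / (1 - a))"

lemma has_real_derivative_powr_primitive:
  assumes "0 < t"
  shows "(powr_primitive a has_real_derivative t powr - a) (at t)"
proof (cases "a = 1")
  case True
  then have "powr_primitive a = ln"
    by (simp add: powr_primitive_def fun_eq_iff)
  then show ?thesis
    using assms DERIV_ln_divide[OF assms] True by (simp add: powr_minus_divide)
next
  case False
  have "((\<lambda>t. t powr (1 - a) / (1 - a)) has_real_derivative
          (1 - a) * t powr (1 - a - 1) / (1 - a)) (at t)"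
    by (rule DERIV_cdivide[OF has_real_derivative_powr[OF assms]])
  moreover have "powr_primitive a = (\<lambda>t. t powr (1 - a) / (1 - a))"
    using False by (simp add: powr_primitive_def fun_eq_iff)
  ultimately show ?thesis
    using False by simp
qed

lemma powr_le_powr_primitive_diff:
  assumes "0 \<le> a" "0 < x"
  shows "(x + 1) powr - a \<le> powr_primitive a (x + 1) - powr_primitive a x"
proof -
  have "\<forall>t. x \<le> t \<and> t \<le> x + 1 \<longrightarrow> (powr_primitive a has_real_derivative t powr - a) (at t)"
    using assms by (auto intro: has_real_derivative_powr_primitive)
  then obtain \<xi> where \<xi>: "x < \<xi>" "\<xi> < x + 1"
    and mvt: "powr_primitive a (x + 1) - powr_primitive a x = (x + 1 - x) * \<xi> powr - a"
    using MVT2[of x "x + 1" "powr_primitive a" "\<lambda>t. t powr - a"] by auto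
  have "(x + 1) powr - a \<le> \<xi> powr - a"
    using assms \<xi> by (intro powr_mono2') auto
  then show ?thesis
    using mvt by simp
qed

lemma gen_harm_diff_le:
  assumes "0 \<le> a" "1 \<le> p" "p \<le> k"
  shows "gen_harm a k - gen_harm a p \<le> powr_primitive a k - powr_primitive a p"
  using assms(3)
proof (induction k rule: dec_induct)
  case (step k)
  have "real (Suc k) powr - a \<le> powr_primitive a (Suc k) - powr_primitive a k"
    using powr_le_powr_primitive_diff[of a "real k"] assms step by (simp add: add.commute)
  then show ?case
    using step.IH by (simp add: gen_harm_Suc)
qed simp

lemma gen_harm_le_sublinear:
  assumes "0 \<le> a" "a < 1" "1 \<le> k"
  shows "gen_harm a k \<le> real k powr (1 - a) / (1 - a)"
proof -
  have "gen_harm a k - 1 \<le> real k powr (1 - a) / (1 - a) - 1 / (1 - a)"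
    using gen_harm_diff_le[of a 1 k] assms by (simp add: powr_primitive_def)
  moreover have "1 \<le> 1 / (1 - a)"
    using assms by simp
  ultimately show ?thesis
    by linarith
qed

lemma gen_harm_le_convergent:
  assumes "1 < a" "1 \<le> k"
  shows "gen_harm a k \<le> a / (a - 1)"
proof -
  have "gen_harm a k - 1 \<le> real k powr (1 - a) / (1 - a) - 1 / (1 - a)"
    using gen_harm_diff_le[of a 1 k] assms by (simp add: powr_primitive_def)
  moreover have "real k powr (1 - a) / (1 - a) \<le> 0"
    using assms by (simp add: divide_nonneg_neg)
  moreover have "1 - 1 / (1 - a) = a / (a - 1)"
    using assms by (simp add: field_simps)
  ultimately show ?thesis
    by linarith
qed

lemma harm_ln_bounds:
  assumes "3 \<le> k"
  shows "ln (real k) \<le> harm k" "harm k \<le> 2 * ln (real k)"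
proof -
  have "ln (real k) \<le> ln (real k + 1)"
    using assms by simp
  then show "ln (real k) \<le> harm k"
    using ln_le_harm[of k] by linarith
  have "exp 1 \<le> real k"
    using exp_le assms by linarith
  then have "1 \<le> ln (real k)"
    by (metis exp_gt_zero ln_exp ln_le_cancel_iff order_less_le_trans)
  moreover have "harm k - 1 \<le> ln (real k)"
    using gen_harm_diff_le[of 1 1 k] assms by (simp add: gen_harm_exponent_1 powr_primitive_def)
  ultimately show "harm k \<le> 2 * ln (real k)"
    by linarith
qed

lemma gen_harm_ratio_le_sublinear:
  assumes "0 \<le> a" "a < 1" "1 \<le> p" "p \<le> k"
  shows "gen_harm a k / gen_harm a p \<le> (real k / real p) powr (1 - a) / (1 - a)"
proof -
  have "gen_harm a k / gen_harm a p \<le> (real k powr (1 - a) / (1 - a)) / real p powr (1 - a)"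
    using gen_harm_le_sublinear[of a k] powr_le_gen_harm[of a p] gen_harm_ge_1[of k a] assms
    by (intro frac_le) auto
  also have "\<dots> = (real k / real p) powr (1 - a) / (1 - a)"
    using assms by (simp add: powr_divide)
  finally show ?thesis .
qed

lemma gen_harm_exponent_1_ratio_le:
  assumes "0 < e" "1 \<le> p" "p \<le> k"
  shows "gen_harm 1 k / gen_harm 1 p \<le> (1 + 1 / e) * (real k / real p) powr e"
proof -
  define r where "r = real k / real p"
  have r: "1 \<le> r"
    using assms by (simp add: r_def)
  have Hp: "1 \<le> gen_harm 1 p"
    using gen_harm_ge_1 assms by simp
  have "gen_harm 1 k \<le> gen_harm 1 p + ln r"
    using gen_harm_diff_le[of 1 p k] assms by (simp add: powr_primitive_def r_def ln_div)
  then have "gen_harm 1 k / gen_harm 1 p \<le> 1 + ln r / gen_harm 1 p"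
    using Hp by (simp add: divide_le_eq distrib_right)
  also have "\<dots> \<le> 1 + ln r"
    using Hp r by (simp add: divide_le_eq mult_le_cancel_left1)
  also have "\<dots> \<le> r powr e + r powr e / e"
    using ln_powr_bound[OF r assms(1)] ge_one_powr_ge_zero[OF r less_imp_le[OF assms(1)]] by linarith
  also have "\<dots> = (1 + 1 / e) * r powr e"
    by (simp add: distrib_right)
  finally show ?thesis
    by (simp add: r_def)
qed

lemma gen_harm_ratio_le_convergent:
  assumes "1 < a" "1 \<le> p" "p \<le> k"
  shows "gen_harm a k / gen_harm a p \<le> a / (a - 1)"
proof -
  have "gen_harm a k / gen_harm a p \<le> gen_harm a k"
    using gen_harm_ge_1[of p a] gen_harm_ge_1[of k a] assms
    by (simp add: divide_le_eq mult_le_cancel_left1)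
  also have "\<dots> \<le> a / (a - 1)"
    using gen_harm_le_convergent assms by simp
  finally show ?thesis .
qed

definition gen_harm_ratio_exponent :: "real \<Rightarrow> real \<Rightarrow> bool" where
  "gen_harm_ratio_exponent a e \<longleftrightarrow> 0 \<le> e \<and> 1 - a \<le> e \<and> (a = 1 \<longrightarrow> 0 < e)"

lemma gen_harm_ratio_le_powr:
  assumes "0 \<le> a" "gen_harm_ratio_exponent a e"
  obtains K where "0 < K"
    "\<And>k p. 1 \<le> p \<Longrightarrow> p \<le> k \<Longrightarrow> gen_harm a k / gen_harm a p \<le> K * (real k / real p) powr e"
proof -
  have e: "0 \<le> e" "1 - a \<le> e" "a = 1 \<Longrightarrow> 0 < e"
    using assms(2) by (auto simp: gen_harm_ratio_exponent_def)
  have powr_le: "(real k / real p) powr e' \<le> (real k / real p) powr e"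
    if "e' \<le> e" "1 \<le> p" "p \<le> k" for e' and k p :: nat
    using that by (intro powr_mono) auto
  consider (sublinear) "a < 1" | (harmonic) "a = 1" | (convergent) "1 < a"
    by linarith
  then show ?thesis
  proof cases
    case sublinear
    show ?thesis
    proof (rule that[of "1 / (1 - a)"])
      fix k p :: nat
      assume p: "1 \<le> p" "p \<le> k"
      have "gen_harm a k / gen_harm a p \<le> 1 / (1 - a) * (real k / real p) powr (1 - a)"
        using gen_harm_ratio_le_sublinear[OF assms(1) sublinear p] by simp
      also have "\<dots> \<le> 1 / (1 - a) * (real k / real p) powr e"
        using powr_le[OF e(2) p] sublinear by (intro mult_left_mono) auto
      finally show "gen_harm a k / gen_harm a p \<le> 1 / (1 - a) * (real k / real p) powr e" .
    qed (use sublinear in simp)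
  next
    case harmonic
    then show ?thesis
      using that[of "1 + 1 / e"] gen_harm_exponent_1_ratio_le[of e] e(3) by (simp add: add_pos_pos)
  next
    case convergent
    show ?thesis
    proof (rule that[of "a / (a - 1)"])
      fix k p :: nat
      assume p: "1 \<le> p" "p \<le> k"
      have "gen_harm a k / gen_harm a p \<le> a / (a - 1) * (real k / real p) powr 0"
        using gen_harm_ratio_le_convergent[OF convergent p] p by simp
      also have "\<dots> \<le> a / (a - 1) * (real k / real p) powr e"
        using powr_le[OF e(1) p] convergent by (intro mult_left_mono) auto
      finally show "gen_harm a k / gen_harm a p \<le> a / (a - 1) * (real k / real p) powr e" .
    qed (use convergent in simp)
  qed
qed

lemma gen_harm_ratio_exponents_split:
  assumes "0 \<le> a" "0 \<le> b" "{a, b} \<noteq> {0, 1}"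
  obtains ea eb where "gen_harm_ratio_exponent a ea" "gen_harm_ratio_exponent b eb"
    "ea + eb = max 1 (2 - (a + b))"
proof -
  define slack where "slack = max 1 (2 - (a + b)) - max 0 (1 - a) - max 0 (1 - b)"
  \<comment> \<open>The slack vanishes with \<open>a = 1\<close> or \<open>b = 1\<close> only if \<open>{a, b} = {0, 1}\<close>.\<close>
  have "0 \<le> slack" "a = 1 \<or> b = 1 \<Longrightarrow> 0 < slack"
    using assms by (auto simp: slack_def doubleton_eq_iff)
  moreover have "max 0 (1 - a) + slack / 2 + (max 0 (1 - b) + slack / 2) = max 1 (2 - (a + b))"
    by (simp add: slack_def)
  ultimately show ?thesis
    by (intro that[of "max 0 (1 - a) + slack / 2" "max 0 (1 - b) + slack / 2"])
       (auto simp: gen_harm_ratio_exponent_def max_def)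
qed

lemma sum_list_eq_sum_list_take:
  fixes xs :: "'a :: monoid_add list"
  assumes "length (filter (\<lambda>v. v \<noteq> 0) xs) = k" "\<forall>v \<in> set (take k xs). v \<noteq> 0"
  shows "sum_list xs = sum_list (take k xs)"
proof -
  have "length (filter (\<lambda>v. v \<noteq> 0) xs)
      = length (filter (\<lambda>v. v \<noteq> 0) (take k xs)) + length (filter (\<lambda>v. v \<noteq> 0) (drop k xs))"
    by (metis append_take_drop_id filter_append length_append)
  moreover have "filter (\<lambda>v. v \<noteq> 0) (take k xs) = take k xs"
    using assms(2) by (rule filter_True)
  ultimately have "filter (\<lambda>v. v \<noteq> 0) (drop k xs) = []"
    using assms(1) by (cases "k \<le> length xs") auto
  moreover have "sum_list ys = 0" if "filter (\<lambda>v. v \<noteq> 0) ys = []" for ys :: "'a list"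
    using that by (induction ys) (auto split: if_splits)
  ultimately have "sum_list (drop k xs) = 0"
    by blast
  then show ?thesis
    by (metis append_take_drop_id sum_list_append add_0_right)
qed

lemma length_sorted_sq [simp]: "length (sorted_sq n x) = n"
  by (simp add: sorted_sq_def)

lemma sum_list_sorted_sq: "sum_list (sorted_sq n x) = (\<Sum>j<n. (x j)^2)"
proof -
  have "sum_list (sorted_sq n x) = sum_list (sort (map (\<lambda>j. (x j)^2) [0..<n]))"
    by (simp add: sorted_sq_def sum_list_rev)
  also have "\<dots> = sum_list (map (\<lambda>j. (x j)^2) [0..<n])"
    by (metis mset_sort sum_mset_sum_list)
  finally show ?thesis
    by (simp add: sum_list_sum_nth atLeast0LessThan)
qed

lemma length_filter_nonzero_sorted_sq:
  "length (filter (\<lambda>v. v \<noteq> 0) (sorted_sq n x)) = card {j. j < n \<and> x j \<noteq> 0}"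
proof -
  have "length (filter (\<lambda>v. v \<noteq> 0) (sorted_sq n x))
      = length (filter (\<lambda>j. x j \<noteq> 0) [0..<n])"
    by (simp add: sorted_sq_def filter_sort comp_def flip: rev_filter)
  also have "\<dots> = card {j. j < n \<and> x j \<noteq> 0}"
    by (simp add: length_filter_conv_card) (intro arg_cong[where f = card] Collect_cong, auto)
  finally show ?thesis .
qed

lemma sum_take_sorted_sq_power_law:
  assumes unit: "sparse_unit n k x" and law: "power_law n k a x" and "q \<le> k"
  shows "sum_list (take q (sorted_sq n x)) = gen_harm a q / gen_harm a k"
proof -
  define L where "L = sorted_sq n x"
  obtain c where "0 < c" and c: "\<And>i. i \<in> {1..k} \<Longrightarrow> L ! (i - 1) = c * real i powr - a"
    using law unfolding power_law_def L_def by blast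
  have len_L: "length L = n"
    by (simp add: L_def)
  have "k \<le> n"
    using unit card_mono[of "{..<n}" "{j. j < n \<and> x j \<noteq> 0}"] by (auto simp: sparse_unit_def)
  have nth_L: "L ! i = c * real (Suc i) powr - a" if "i < k" for i
    using c[of "Suc i"] that by simp
  have take_L: "sum_list (take j L) = c * gen_harm a j" if "j \<le> k" for j
    using that
  proof (induction j)
    case (Suc j)
    then have "take (Suc j) L = take j L @ [L ! j]"
      using \<open>k \<le> n\<close> by (simp add: L_def take_Suc_conv_app_nth)
    then show ?case
      using Suc by (simp add: nth_L gen_harm_Suc distrib_left)
  qed (simp add: gen_harm_def)
  have "\<forall>v \<in> set (take k L). v \<noteq> 0"
    using \<open>0 < c\<close> \<open>k \<le> n\<close> by (auto simp: in_set_conv_nth nth_L len_L)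
  then have "sum_list L = sum_list (take k L)"
    using unit by (intro sum_list_eq_sum_list_take)
      (simp_all add: L_def length_filter_nonzero_sorted_sq sparse_unit_def)
  then have "c * gen_harm a k = 1"
    using unit take_L[of k] by (simp add: L_def sum_list_sorted_sq sparse_unit_def)
  then have "c = 1 / gen_harm a k"
    by (auto simp: eq_divide_eq mult.commute)
  then show ?thesis
    using take_L[OF \<open>q \<le> k\<close>] by (simp add: L_def)
qed

lemma struct_fun_power_law:
  assumes "sparse_unit n k x" "power_law n k a x" "p \<le> k"
  shows "struct_fun n x p = gen_harm a k / gen_harm a p"
  using sum_take_sorted_sq_power_law[OF assms] by (simp add: struct_fun_def)

lemma mult_powr_divide_le:
  fixes p k T :: real
  assumes "1 \<le> p" "0 < k" "1 \<le> T"
  shows "p * (k / p) powr T \<le> k powr T"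
proof -
  have "p * (k / p) powr T = k powr T * p powr (1 - T)"
    using assms by (simp add: powr_divide powr_diff)
  also have "\<dots> \<le> k powr T * p powr 0"
    using assms by (intro mult_left_mono powr_mono) auto
  also have "\<dots> = k powr T"
    using assms by simp
  finally show ?thesis .
qed

definition power_law_term :: "real \<Rightarrow> real \<Rightarrow> nat \<Rightarrow> nat \<Rightarrow> real" where
  "power_law_term a b k p = real p * (gen_harm a k / gen_harm a p) * (gen_harm b k / gen_harm b p)"

lemma power_law_term_commute: "power_law_term a b = power_law_term b a"
  by (simp add: power_law_term_def fun_eq_iff mult_ac)

lemma sample_term_power_law:
  assumes "sparse_unit n k u" "sparse_unit n k v" "power_law n k a u" "power_law n k b v"
  shows "sample_term n u v k = Max (power_law_term a b k ` {1..k})"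
  unfolding sample_term_def power_law_term_def
  by (intro arg_cong[where f = Max] image_cong refl)
     (simp add: struct_fun_power_law[OF assms(1,3)] struct_fun_power_law[OF assms(2,4)])

lemma Max_power_law_term_0_1:
  assumes "1 \<le> k"
  shows "Max (power_law_term 0 1 k ` {1..k}) = real k * harm k"
proof (rule Max_eqI)
  show "real k * harm k \<in> power_law_term 0 1 k ` {1..k}"
    using assms by (intro image_eqI[of _ _ 1])
      (auto simp: power_law_term_def gen_harm_exponent_0 gen_harm_exponent_1)
next
  fix y
  assume "y \<in> power_law_term 0 1 k ` {1..k}"
  then obtain p where p: "1 \<le> p" "p \<le> k" and y: "y = real k * (harm k / harm p)"
    by (auto simp: power_law_term_def gen_harm_exponent_0 gen_harm_exponent_1)
  have "harm k / harm p \<le> (harm k / 1 :: real)"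
    using gen_harm_ge_1[OF p(1), of 1] harm_nonneg[of k] p(1)
    by (intro divide_left_mono) (auto simp: gen_harm_exponent_1)
  then show "y \<le> real k * harm k"
    unfolding y by (intro mult_left_mono) auto
qed simp

lemma powr_le_Max_power_law_term:
  assumes "0 \<le> a" "0 \<le> b" "1 \<le> k"
  shows "real k powr max 1 (2 - (a + b)) \<le> Max (power_law_term a b k ` {1..k})"
proof -
  have le_Max: "power_law_term a b k p \<le> Max (power_law_term a b k ` {1..k})" if "p \<in> {1..k}" for p
    using that by (intro Max_ge) auto
  have "2 - (a + b) = (1 - a) + (1 - b)"
    by simp
  then have "real k powr (2 - (a + b)) = real k powr (1 - a) * real k powr (1 - b)"
    by (simp only: powr_add)
  also have "\<dots> \<le> gen_harm a k * gen_harm b k"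
    using powr_le_gen_harm[of a k] powr_le_gen_harm[of b k] gen_harm_ge_1[of k a] assms
    by (intro mult_mono) auto
  also have "\<dots> = power_law_term a b k 1"
    by (simp add: power_law_term_def)
  also have "\<dots> \<le> Max (power_law_term a b k ` {1..k})"
    using assms by (intro le_Max) simp
  finally have at_1: "real k powr (2 - (a + b)) \<le> Max (power_law_term a b k ` {1..k})" .
  have "real k powr 1 = power_law_term a b k k"
    using gen_harm_ge_1[OF assms(3), of a] gen_harm_ge_1[OF assms(3), of b] assms
    by (simp add: power_law_term_def)
  also have "\<dots> \<le> Max (power_law_term a b k ` {1..k})"
    using assms by (intro le_Max) simp
  finally show ?thesis
    using at_1 by (simp add: max_def)
qed

lemma Max_power_law_term_le_powr:
  assumes "0 \<le> a" "0 \<le> b" "{a, b} \<noteq> {0, 1}"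
  obtains C where "0 < C"
    "\<And>k. 1 \<le> k \<Longrightarrow> Max (power_law_term a b k ` {1..k}) \<le> C * real k powr max 1 (2 - (a + b))"
proof -
  obtain ea eb where ea: "gen_harm_ratio_exponent a ea" and eb: "gen_harm_ratio_exponent b eb"
    and sum: "ea + eb = max 1 (2 - (a + b))"
    using gen_harm_ratio_exponents_split[OF assms] .
  obtain Ka where "0 < Ka"
    and Ka: "\<And>k p. 1 \<le> p \<Longrightarrow> p \<le> k \<Longrightarrow> gen_harm a k / gen_harm a p \<le> Ka * (real k / real p) powr ea"
    using gen_harm_ratio_le_powr[OF assms(1) ea] by blast
  obtain Kb where "0 < Kb"
    and Kb: "\<And>k p. 1 \<le> p \<Longrightarrow> p \<le> k \<Longrightarrow> gen_harm b k / gen_harm b p \<le> Kb * (real k / real p) powr eb"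
    using gen_harm_ratio_le_powr[OF assms(2) eb] by blast
  show ?thesis
  proof (rule that[of "Ka * Kb"])
    fix k :: nat
    assume "1 \<le> k"
    show "Max (power_law_term a b k ` {1..k}) \<le> Ka * Kb * real k powr max 1 (2 - (a + b))"
    proof (rule Max.boundedI)
      fix y
      assume "y \<in> power_law_term a b k ` {1..k}"
      then obtain p where p: "1 \<le> p" "p \<le> k" and y: "y = power_law_term a b k p"
        by auto
      have "y \<le> real p * (Ka * (real k / real p) powr ea) * (Kb * (real k / real p) powr eb)"
        unfolding y power_law_term_def using Ka[OF p] Kb[OF p] p \<open>0 < Ka\<close>
          gen_harm_ge_1[of p a] gen_harm_ge_1[of k a] gen_harm_ge_1[of p b] gen_harm_ge_1[of k b]
        by (intro mult_mono) auto
      also have "\<dots> = Ka * Kb * (real p * (real k / real p) powr max 1 (2 - (a + b)))"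
        by (simp flip: sum add: powr_add algebra_simps)
      also have "\<dots> \<le> Ka * Kb * real k powr max 1 (2 - (a + b))"
        using mult_powr_divide_le[of "real p" "real k"] p \<open>0 < Ka\<close> \<open>0 < Kb\<close> by simp
      finally show "y \<le> Ka * Kb * real k powr max 1 (2 - (a + b))" .
    qed (use \<open>1 \<le> k\<close> in auto)
  qed (use \<open>0 < Ka\<close> \<open>0 < Kb\<close> in simp)
qed

lemma sample_term_boundary:
  assumes "{a, b} = {0, 1}" "1 \<le> k"
    and "sparse_unit n k u" "sparse_unit n k v" "power_law n k a u" "power_law n k b v"
  shows "sample_term n u v k = real k * harm k"
proof -
  have "power_law_term a b = power_law_term 0 1"
    using assms(1) by (auto simp: doubleton_eq_iff power_law_term_commute)
  then show ?thesis
    using sample_term_power_law[OF assms(3-6)] Max_power_law_term_0_1[OF assms(2)] by simp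
qed

theorem corollary1:
  fixes \<alpha>u \<alpha>v :: real
  assumes "\<alpha>u \<ge> 0" and "\<alpha>v \<ge> 0"
  shows "\<exists>C1 C2 K. C1 > 0 \<and> C2 > 0 \<and>
    (\<forall>k\<ge>K. \<forall>n u v.
       sparse_unit n k u \<and> sparse_unit n k v \<and> power_law n k \<alpha>u u \<and> power_law n k \<alpha>v v \<longrightarrow>
       (let g = (if {\<alpha>u, \<alpha>v} = {0, 1} then real k * ln (real k)
                 else real k powr (max 1 (2 - (\<alpha>u + \<alpha>v))))
        in C1 * g \<le> sample_term n u v k \<and> sample_term n u v k \<le> C2 * g))"
proof (cases "{\<alpha>u, \<alpha>v} = {0, 1}")
  case True
  have "1 * (real k * ln (real k)) \<le> sample_term n u v k \<and>
      sample_term n u v k \<le> 2 * (real k * ln (real k))"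
    if "3 \<le> k" "sparse_unit n k u \<and> sparse_unit n k v \<and> power_law n k \<alpha>u u \<and> power_law n k \<alpha>v v"
    for k n u v
    using sample_term_boundary[OF True, of k n u v] that
      mult_left_mono[OF harm_ln_bounds(1)[OF that(1)], of "real k"]
      mult_left_mono[OF harm_ln_bounds(2)[OF that(1)], of "real k"] by simp
  then show ?thesis
    using True by (intro exI[of _ 1] exI[of _ 2] exI[of _ 3]) (simp add: Let_def)
next
  case False
  obtain C where "0 < C" and C: "\<And>k. 1 \<le> k \<Longrightarrow>
      Max (power_law_term \<alpha>u \<alpha>v k ` {1..k}) \<le> C * real k powr max 1 (2 - (\<alpha>u + \<alpha>v))"
    using Max_power_law_term_le_powr[OF assms False] by blast
  have "1 * real k powr max 1 (2 - (\<alpha>u + \<alpha>v)) \<le> sample_term n u v k \<and>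
      sample_term n u v k \<le> C * real k powr max 1 (2 - (\<alpha>u + \<alpha>v))"
    if "1 \<le> k" "sparse_unit n k u \<and> sparse_unit n k v \<and> power_law n k \<alpha>u u \<and> power_law n k \<alpha>v v"
    for k n u v
    using that sample_term_power_law[of n k u v \<alpha>u \<alpha>v] powr_le_Max_power_law_term[OF assms that(1)]
      C[OF that(1)] by simp
  then show ?thesis
    using False \<open>0 < C\<close> by (intro exI[of _ 1] exI[of _ C] exI[of _ 1]) (simp add: Let_def)
qed

end
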